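(* Let $m\in\mathbb{N}$, $p\in[1,\infty)$, let $\|\cdot\|$ be a norm on $\mathbb{R}^m$, let $\mathcal{Y}\subseteq\mathbb{R}^m$ be closed with the metric induced by $\|\cdot\|$, and let $\mathfrak{C}$ be a polyhedral cover of $\mathcal{Y}$ with mesh size $\eta(\mathfrak{C})$. (i) If $\mathfrak{C}$ is bounded and $\mathcal{G}$ is an interpolation function set for $\mathfrak{C}$, then for all $\mu,\nu\in\mathcal{P}_p(\mathcal{Y};\mathcal{G})$ with $\mu\overset{\mathcal{G}}{\sim}\nu$ we have $W_p(\mu,\nu)\le2\eta(\mathfrak{C})$. (ii) If $\mathfrak{C}$ is unbounded and $\mathcal{G}$ is a $p$-interpolation function set for $\mathfrak{C}$ with $\{\overline{g}_{\boldsymbol{u}}:\boldsymbol{u}\in D(\mathfrak{C})\}\subset\operatorname{span}_1(\mathcal{G})$ a $p$-radial function set, then for all $\mu,\nu\in\mathcal{P}_p(\mathcal{Y};\mathcal{G})$ with $\mu\overset{\mathcal{G}}{\sim}\nu$ we have $$W_p(\mu,\nu)\le2\eta(\mathfrak{C})+2\Big(\sum_{\boldsymbol{u}\in D(\mathfrak{C})}\int_{\mathcal{Y}}\overline{g}_{\boldsymbol{u}}\,\mathrm{d}\mu\Big)^{1/p}.$$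
   Context: $\mathcal{P}_p(\mathcal{Y})$: Borel probability measures with finite $p$-th moment; $W_p$: Wasserstein distance of order $p$. For a collection $\mathcal{G}$ of real Borel functions on $\mathcal{Y}$, $\mathcal{P}_p(\mathcal{Y};\mathcal{G}):=\{\mu\in\mathcal{P}_p(\mathcal{Y}):\mathcal{G}\subseteq\mathcal{L}^p(\mathcal{Y},\mu)\}$, and $\mu\overset{\mathcal{G}}{\sim}\nu$ means $\int g\,\mathrm{d}\mu=\int g\,\mathrm{d}\nu$ for all $g\in\mathcal{G}$. $\operatorname{span}_1(\mathcal{G})$ is the set of $y_0+\sum_{j=1}^ky_jg_j$ ($k\in\mathbb{N}_0$, $y_j\in\mathbb{R}$, $g_j\in\mathcal{G}$). Convex geometry: a convex $C'\subseteq C$ is a face of a convex set $C$ if $\lambda x_1+(1-\lambda)x_2\in C'$ with $0<\lambda<1$, $x_1,x_2\in C$ implies $x_1,x_2\in C'$; $x$ is an extreme point if $\{x\}$ is a face; $z$ is an extreme direction of $C$ if $\{x+\lambda z:\lambda\ge0\}$ is a face of $C$ for some $x\in C$. A polyhedron is a finite intersection of closed half-spaces. A polyhedral cover of $\mathcal{Y}$ is a finite collection $\mathfrak{C}$ of polyhedra in $\mathbb{R}^m$, each with at least one extreme point, with $\bigcup_{C\in\mathfrak{C}}C\supseteq\mathcal{Y}$, such that if $C_1,C_2\in\mathfrak{C}$ and $C_1\cap C_2\ne\emptyset$ then $C_1\cap C_2$ is a face of both. It is bounded if all members are bounded. For a polyhedron $C$ with an extreme point, $V(C)$ is its (finite)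 set of extreme points and $D(C)$ its (finite, possibly empty) set of extreme directions. $\mathfrak{F}(\mathfrak{C})$ is the set of non-empty faces of members of $\mathfrak{C}$, $V(\mathfrak{C}):=\bigcup_{C\in\mathfrak{C}}V(C)$, $D(\mathfrak{C}):=\bigcup_{C\in\mathfrak{C}}D(C)$, and $\eta(\mathfrak{C}):=\max_{C\in\mathfrak{C}}\max_{\boldsymbol{v},\boldsymbol{v}'\in V(C)}\|\boldsymbol{v}-\boldsymbol{v}'\|$. A vertex interpolation function set for $\mathfrak{C}$ is a family $\{g_{\boldsymbol{v}}:\bigcup_{C\in\mathfrak{C}}C\to\mathbb{R}\}_{\boldsymbol{v}\in V(\mathfrak{C})}$ with: (VIF1) $g_{\boldsymbol{v}}\ge0$; (VIF2) $g_{\boldsymbol{v}}(\boldsymbol{v}')=\mathbf{1}_{\{\boldsymbol{v}=\boldsymbol{v}'\}}$ for $\boldsymbol{v},\boldsymbol{v}'\in V(\mathfrak{C})$; (VIF3) $\sum_{\boldsymbol{v}\in V(F)}g_{\boldsymbol{v}}(\boldsymbol{x})=1$ for all $F\in\mathfrak{F}(\mathfrak{C})$, $\boldsymbol{x}\in F$; (VIF4) $g_{\boldsymbol{v}}(\boldsymbol{x})=0$ for all $F\in\mathfrak{F}(\mathfrak{C})$, $\boldsymbol{x}\in F$, $\boldsymbol{v}\in V(\mathfrak{C})\setminus V(F)$. When $\mathfrak{C}$ is unbounded, a $p$-radial function set is a family $\{\overline{g}_{\boldsymbol{u}}:\bigcup_{C\in\mathfrak{C}}C\to\mathbb{R}\}_{\boldsymbol{u}\in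 D(\mathfrak{C})}$ with (RF1) $\overline{g}_{\boldsymbol{u}}\ge0$ and (RF2) for every unbounded $F\in\mathfrak{F}(\mathfrak{C})$ and $\boldsymbol{x}\in F$: $(\min_{\boldsymbol{y}\in\operatorname{conv}(V(F))}\|\boldsymbol{x}-\boldsymbol{y}\|)^p\le\sum_{\boldsymbol{u}\in D(F)}\overline{g}_{\boldsymbol{u}}(\boldsymbol{x})$. For unbounded $\mathfrak{C}$, a set $\mathcal{G}$ of real functions on $\bigcup_{C\in\mathfrak{C}}C$ is a $p$-interpolation function set if $\operatorname{span}_1(\mathcal{G})$ contains a vertex interpolation function set and a $p$-radial function set; for bounded $\mathfrak{C}$, $\mathcal{G}$ is an interpolation function set if $\operatorname{span}_1(\mathcal{G})$ contains a vertex interpolation function set. *)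

theory Defs
  imports "HOL-Analysis.Analysis" "HOL-Probability.Probability"
begin

definition is_norm :: "('a::real_vector \<Rightarrow> real) \<Rightarrow> bool" where
  "is_norm N \<longleftrightarrow> (\<forall>x. N x \<ge> 0) \<and> (\<forall>x. N x = 0 \<longleftrightarrow> x = 0) \<and>
     (\<forall>c x. N (c *\<^sub>R x) = \<bar>c\<bar> * N x) \<and> (\<forall>x y. N (x + y) \<le> N x + N y)"

definition borel_prob_on :: "'a::topological_space set \<Rightarrow> 'a measure \<Rightarrow> bool" where
  "borel_prob_on Y \<mu> \<longleftrightarrow> prob_space \<mu> \<and> sets \<mu> = sets (restrict_space borel Y)"

definition Pp :: "real \<Rightarrow> ('a::real_normed_vector \<Rightarrow> real) \<Rightarrow> 'a set \<Rightarrow> 'a measure set" where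
  "Pp p N Y = {\<mu>. borel_prob_on Y \<mu> \<and> (\<exists>y0\<in>Y. integrable \<mu> (\<lambda>x. N (x - y0) powr p))}"

definition in_Lp :: "real \<Rightarrow> 'a measure \<Rightarrow> ('a \<Rightarrow> real) \<Rightarrow> bool" where
  "in_Lp p \<mu> g \<longleftrightarrow> g \<in> borel_measurable \<mu> \<and> integrable \<mu> (\<lambda>x. \<bar>g x\<bar> powr p)"

definition PpG :: "real \<Rightarrow> ('a::real_normed_vector \<Rightarrow> real) \<Rightarrow> 'a set \<Rightarrow> ('a \<Rightarrow> real) set \<Rightarrow> 'a measure set" where
  "PpG p N Y G = {\<mu> \<in> Pp p N Y. \<forall>g\<in>G. in_Lp p \<mu> g}"

definition G_equiv :: "('a \<Rightarrow> real) set \<Rightarrow> 'a measure \<Rightarrow> 'a measure \<Rightarrow> bool" where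
  "G_equiv G \<mu> \<nu> \<longleftrightarrow> (\<forall>g\<in>G. (\<integral>x. g x \<partial>\<mu>) = (\<integral>x. g x \<partial>\<nu>))"

definition couplings :: "'a measure \<Rightarrow> 'a measure \<Rightarrow> ('a \<times> 'a) measure set" where
  "couplings \<mu> \<nu> = {\<gamma>. prob_space \<gamma> \<and> sets \<gamma> = sets (\<mu> \<Otimes>\<^sub>M \<nu>) \<and>
      distr \<gamma> \<mu> fst = \<mu> \<and> distr \<gamma> \<nu> snd = \<nu>}"

text \<open>Wasserstein distance of order p w.r.t. the metric (x,y) \<mapsto> N(x - y).
  (For measures with finite p-th moment the infimum is finite.)\<close>
definition Wasserstein :: "real \<Rightarrow> ('a::real_vector \<Rightarrow> real) \<Rightarrow> 'a measure \<Rightarrow> 'a measure \<Rightarrow> real" where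
  "Wasserstein p N \<mu> \<nu> =
     enn2real (INF \<gamma>\<in>couplings \<mu> \<nu>. \<integral>\<^sup>+z. ennreal (N (fst z - snd z) powr p) \<partial>\<gamma>) powr (1 / p)"

definition vertices :: "'a::real_vector set \<Rightarrow> 'a set" where
  "vertices C = {v. v extreme_point_of C}"

text \<open>Extreme directions, normalized to Euclidean norm 1 (one representative per ray direction).\<close>
definition ext_dirs :: "'a::real_normed_vector set \<Rightarrow> 'a set" where
  "ext_dirs C = {z. norm z = 1 \<and> (\<exists>x\<in>C. {x + l *\<^sub>R z | l. l \<ge> 0} face_of C)}"

definition polyhedral_cover :: "'a::euclidean_space set set \<Rightarrow> 'a set \<Rightarrow> bool" where
  "polyhedral_cover CC Y \<longleftrightarrow> finite CC \<and> (\<forall>C\<in>CC. polyhedron C \<and> vertices C \<noteq> {}) \<and>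
     Y \<subseteq> \<Union>CC \<and>
     (\<forall>C1\<in>CC. \<forall>C2\<in>CC. C1 \<inter> C2 \<noteq> {} \<longrightarrow> (C1 \<inter> C2) face_of C1 \<and> (C1 \<inter> C2) face_of C2)"

definition cover_faces :: "'a::real_vector set set \<Rightarrow> 'a set set" where
  "cover_faces CC = {F. F \<noteq> {} \<and> (\<exists>C\<in>CC. F face_of C)}"

definition cover_vertices :: "'a::real_vector set set \<Rightarrow> 'a set" where
  "cover_vertices CC = (\<Union>C\<in>CC. vertices C)"

definition cover_dirs :: "'a::real_normed_vector set set \<Rightarrow> 'a set" where
  "cover_dirs CC = (\<Union>C\<in>CC. ext_dirs C)"

definition mesh :: "('a::real_vector \<Rightarrow> real) \<Rightarrow> 'a set set \<Rightarrow> real" where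
  "mesh N CC = Max ((\<lambda>C. Max {N (v - v') | v v'. v \<in> vertices C \<and> v' \<in> vertices C}) ` CC)"

definition vertex_interp :: "'a::real_vector set set \<Rightarrow> ('a \<Rightarrow> 'a \<Rightarrow> real) \<Rightarrow> bool" where
  "vertex_interp CC g \<longleftrightarrow>
     (\<forall>v\<in>cover_vertices CC. \<forall>x\<in>\<Union>CC. g v x \<ge> 0) \<and>
     (\<forall>v\<in>cover_vertices CC. \<forall>v'\<in>cover_vertices CC. g v v' = (if v = v' then 1 else 0)) \<and>
     (\<forall>F\<in>cover_faces CC. \<forall>x\<in>F. (\<Sum>v\<in>vertices F. g v x) = 1) \<and>
     (\<forall>F\<in>cover_faces CC. \<forall>x\<in>F. \<forall>v\<in>cover_vertices CC - vertices F. g v x = 0)"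

definition radial_fun_set :: "real \<Rightarrow> ('a::real_normed_vector \<Rightarrow> real) \<Rightarrow> 'a set set \<Rightarrow> ('a \<Rightarrow> 'a \<Rightarrow> real) \<Rightarrow> bool" where
  "radial_fun_set p N CC gb \<longleftrightarrow>
     (\<forall>u\<in>cover_dirs CC. \<forall>x\<in>\<Union>CC. gb u x \<ge> 0) \<and>
     (\<forall>F\<in>cover_faces CC. \<not> bounded F \<longrightarrow>
        (\<forall>x\<in>F. (INF y\<in>convex hull (vertices F). N (x - y)) powr p \<le> (\<Sum>u\<in>ext_dirs F. gb u x)))"

definition span1 :: "('a \<Rightarrow> real) set \<Rightarrow> ('a \<Rightarrow> real) set" where
  "span1 G = {f. \<exists>c0 S c. finite S \<and> S \<subseteq> G \<and> f = (\<lambda>x. c0 + (\<Sum>h\<in>S. c h * h x))}"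

definition interp_fun_set :: "'a::real_vector set set \<Rightarrow> ('a \<Rightarrow> real) set \<Rightarrow> bool" where
  "interp_fun_set CC G \<longleftrightarrow> (\<exists>g. vertex_interp CC g \<and> (\<forall>v\<in>cover_vertices CC. g v \<in> span1 G))"

definition p_interp_fun_set :: "real \<Rightarrow> ('a::real_normed_vector \<Rightarrow> real) \<Rightarrow> 'a set set \<Rightarrow> ('a \<Rightarrow> real) set \<Rightarrow> bool" where
  "p_interp_fun_set p N CC G \<longleftrightarrow> interp_fun_set CC G \<and>
     (\<exists>gb. radial_fun_set p N CC gb \<and> (\<forall>u\<in>cover_dirs CC. gb u \<in> span1 G))"

end

theory Submission
  imports Defs
begin

text \<open>
  The vertex interpolation functions \<open>g\<^sub>v\<close> form a partition of unity on \<open>Y\<close>, and since they lie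
  in \<open>span\<^sub>1(G)\<close> they have the same integral \<open>m\<^sub>v\<close> under \<open>\<mu>\<close> and \<open>\<nu>\<close>. Transporting mass through
  the vertices, \<open>\<gamma>(dx, dy) = \<Sum>\<^sub>v g\<^sub>v(x) g\<^sub>v(y) / m\<^sub>v \<mu>(dx) \<nu>(dy)\<close>, is therefore a coupling of \<open>\<mu>\<close> and \<open>\<nu>\<close>
  under which \<open>x\<close> and \<open>y\<close> always share a vertex \<open>v\<close> of the cells containing them. A point of a
  cell \<open>C\<close> is within \<open>\<eta> + d(x, conv V(C))\<close> of each vertex of \<open>C\<close>, and the \<open>p\<close>-radial functions
  bound \<open>d(x, conv V(C))\<^sup>p\<close> by \<open>R(x) = \<Sum>\<^sub>u gb\<^sub>u(x)\<close>; in the bounded case \<open>R = 0\<close>. Hence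
  \<open>\<parallel>x - y\<parallel> \<le> 2\<eta> + R(x)\<^bsup>1/p\<^esup> + R(y)\<^bsup>1/p\<^esup>\<close> on the support of \<open>\<gamma>\<close>, and a Minkowski-type estimate in
  \<open>L\<^sup>p(\<gamma>)\<close>, using that both marginals integrate \<open>R\<close> to the same value, gives
  \<open>W\<^sub>p(\<mu>, \<nu>) \<le> 2\<eta> + 2 (\<integral> R d\<mu>)\<^bsup>1/p\<^esup>\<close>.
\<close>

lemma powr_add_le_weighted:
  fixes x y a b p :: real
  assumes "x \<ge> 0" "y \<ge> 0" "a > 0" "b > 0" "p \<ge> 1"
  shows "(x + y) powr p \<le> (a + b) powr (p - 1) * (x powr p / a powr (p - 1) + y powr p / b powr (p - 1))"
proof -
  have scale: "c * (z / c) powr p = z powr p / c powr (p - 1)" if "c > 0" "z \<ge> 0" for c z :: real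
    using that by (simp add: powr_divide powr_diff field_simps)
  have ab: "a powr (p - 1) \<le> (a + b) powr (p - 1)" "b powr (p - 1) \<le> (a + b) powr (p - 1)"
    using assms by (auto intro: powr_mono2)
  consider "x = 0" | "y = 0" | "x > 0" "y > 0" using assms by linarith
  then show ?thesis
  proof cases
    case 1
    then show ?thesis using ab assms by (simp add: divide_simps mult.commute mult_left_mono)
  next
    case 2
    then show ?thesis using ab assms by (simp add: divide_simps mult.commute mult_left_mono)
  next
    case 3
    define t where "t = b / (a + b)"
    have t: "0 \<le> t" "t \<le> 1" using assms by (auto simp: t_def)
    have weights: "(a + b) * (1 - t) = a" "(a + b) * t = b"
      using assms by (simp_all add: t_def field_simps)
    have "(1 - t) * (x / a) = x / (a + b)" "t * (y / b) = y / (a + b)"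
      using assms by (simp_all add: t_def field_simps)
    then have "x + y = (a + b) * ((1 - t) * (x / a) + t * (y / b))"
      using assms by (simp add: add_divide_distrib[symmetric])
    then have "(x + y) powr p = (a + b) powr p * ((1 - t) * (x / a) + t * (y / b)) powr p"
      using assms t 3 by (simp add: powr_mult)
    also have "\<dots> \<le> (a + b) powr p * ((1 - t) * (x / a) powr p + t * (y / b) powr p)"
      using convex_onD[OF powr_convex[OF assms(5)], of t "x / a" "y / b"] t 3 assms
      by (simp add: mult_left_mono)
    also have "\<dots> = (a + b) powr (p - 1) * ((a + b) * ((1 - t) * (x / a) powr p + t * (y / b) powr p))"
      using assms by (simp add: powr_diff)
    also have "(a + b) * ((1 - t) * (x / a) powr p + t * (y / b) powr p)
        = a * (x / a) powr p + b * (y / b) powr p"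
      using assms by (simp add: distrib_left mult.assoc[symmetric] weights)
    finally show ?thesis using assms by (simp add: scale)
  qed
qed

text \<open>Jensen for \<open>t\<^sup>p\<close> with weights \<open>c/(c+2s)\<close>, \<open>s/(c+2s)\<close>, \<open>s/(c+2s)\<close>; integrated over a coupling
  whose marginals have \<open>p\<close>-th moments at most \<open>s\<^sup>p\<close>, it becomes Minkowski's inequality.\<close>

lemma powr_add3_le:
  fixes c s x y p :: real
  assumes "c > 0" "s > 0" "x \<ge> 0" "y \<ge> 0" "p \<ge> 1"
  shows "(c + x + y) powr p \<le> (c + 2 * s) powr (p - 1) * (c + (x powr p + y powr p) / s powr (p - 1))"
proof -
  have "(x + y) powr p \<le> (2 * s) powr (p - 1) * ((x powr p + y powr p) / s powr (p - 1))"
    using powr_add_le_weighted[of x y s s p] assms by (simp add: add_divide_distrib)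
  then have xy: "(x + y) powr p / (2 * s) powr (p - 1) \<le> (x powr p + y powr p) / s powr (p - 1)"
    using assms by (simp add: divide_simps mult.commute)
  have "(c + (x + y)) powr p
      \<le> (c + 2 * s) powr (p - 1) * (c powr p / c powr (p - 1) + (x + y) powr p / (2 * s) powr (p - 1))"
    using powr_add_le_weighted[of c "x + y" c "2 * s" p] assms by simp
  also have "c powr p / c powr (p - 1) = c"
    using assms by (simp add: powr_diff)
  also have "(c + 2 * s) powr (p - 1) * (c + (x + y) powr p / (2 * s) powr (p - 1))
      \<le> (c + 2 * s) powr (p - 1) * (c + (x powr p + y powr p) / s powr (p - 1))"
    using xy by (intro mult_left_mono add_left_mono) auto
  finally show ?thesis
    by (simp add: add.assoc)
qed

lemma is_norm_nonneg: "is_norm N \<Longrightarrow> N x \<ge> 0"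
  unfolding is_norm_def by blast

lemma is_norm_zero: "is_norm N \<Longrightarrow> N 0 = 0"
  unfolding is_norm_def by blast

lemma is_norm_minus_commute:
  assumes "is_norm N" shows "N (a - b) = N (b - a)"
  using assms unfolding is_norm_def
  by (metis abs_minus_cancel abs_one minus_diff_eq mult_1 scaleR_minus1_left)

lemma is_norm_triangle_diff:
  assumes "is_norm N" shows "N (a - c) \<le> N (a - b) + N (b - c)"
  using assms unfolding is_norm_def by (metis diff_add_cancel add_diff_eq)

lemma convex_on_is_norm_diff:
  assumes N: "is_norm N" and "convex A" shows "convex_on A (\<lambda>y. N (y - v))"
proof (rule convex_onI[OF _ \<open>convex A\<close>])
  fix t :: real and x y assume t: "0 < t" "t < 1"
  have "(1 - t) *\<^sub>R x + t *\<^sub>R y - v = (1 - t) *\<^sub>R (x - v) + t *\<^sub>R (y - v)"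
    by (simp add: algebra_simps)
  then show "N ((1 - t) *\<^sub>R x + t *\<^sub>R y - v) \<le> (1 - t) * N (x - v) + t * N (y - v)"
    using N t unfolding is_norm_def by (metis abs_of_pos diff_gt_0_iff_gt)
qed

section \<open>Couplings through a partition of unity\<close>

lemma distr_density_pair_fst:
  assumes "sigma_finite_measure \<nu>" and f[measurable]: "f \<in> borel_measurable (\<mu> \<Otimes>\<^sub>M \<nu>)"
    and rows: "AE x in \<mu>. (\<integral>\<^sup>+y. f (x, y) \<partial>\<nu>) = 1"
  shows "distr (density (\<mu> \<Otimes>\<^sub>M \<nu>) f) \<mu> fst = \<mu>"
proof (rule measure_eqI)
  interpret \<nu>: sigma_finite_measure \<nu> by fact
  fix A assume "A \<in> sets (distr (density (\<mu> \<Otimes>\<^sub>M \<nu>) f) \<mu> fst)"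
  then have A[measurable]: "A \<in> sets \<mu>" by simp
  have "fst -` A \<inter> space (\<mu> \<Otimes>\<^sub>M \<nu>) = A \<times> space \<nu>"
    using sets.sets_into_space[OF A] by (auto simp: space_pair_measure)
  then have "emeasure (distr (density (\<mu> \<Otimes>\<^sub>M \<nu>) f) \<mu> fst) A
      = (\<integral>\<^sup>+z. f z * indicator (A \<times> space \<nu>) z \<partial>(\<mu> \<Otimes>\<^sub>M \<nu>))"
    by (simp add: emeasure_distr emeasure_density)
  also have "\<dots> = (\<integral>\<^sup>+x. \<integral>\<^sup>+y. f (x, y) * indicator A x \<partial>\<nu> \<partial>\<mu>)"
    by (auto simp: \<nu>.nn_integral_fst[symmetric] intro!: nn_integral_cong split: split_indicator)
  also have "\<dots> = (\<integral>\<^sup>+x. (\<integral>\<^sup>+y. f (x, y) \<partial>\<nu>) * indicator A x \<partial>\<mu>)"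
    by (intro nn_integral_cong nn_integral_multc) measurable
  also have "\<dots> = (\<integral>\<^sup>+x. indicator A x \<partial>\<mu>)"
    using rows by (intro nn_integral_cong_AE) auto
  finally show "emeasure (distr (density (\<mu> \<Otimes>\<^sub>M \<nu>) f) \<mu> fst) A = emeasure \<mu> A"
    by simp
qed simp

lemma distr_density_pair_snd:
  assumes "pair_sigma_finite \<mu> \<nu>" and f[measurable]: "f \<in> borel_measurable (\<mu> \<Otimes>\<^sub>M \<nu>)"
    and cols: "AE y in \<nu>. (\<integral>\<^sup>+x. f (x, y) \<partial>\<mu>) = 1"
  shows "distr (density (\<mu> \<Otimes>\<^sub>M \<nu>) f) \<nu> snd = \<nu>"
proof (rule measure_eqI)
  interpret pair_sigma_finite \<mu> \<nu> by fact
  fix B assume "B \<in> sets (distr (density (\<mu> \<Otimes>\<^sub>M \<nu>) f) \<nu> snd)"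
  then have B[measurable]: "B \<in> sets \<nu>" by simp
  have "snd -` B \<inter> space (\<mu> \<Otimes>\<^sub>M \<nu>) = space \<mu> \<times> B"
    using sets.sets_into_space[OF B] by (auto simp: space_pair_measure)
  then have "emeasure (distr (density (\<mu> \<Otimes>\<^sub>M \<nu>) f) \<nu> snd) B
      = (\<integral>\<^sup>+z. f z * indicator (space \<mu> \<times> B) z \<partial>(\<mu> \<Otimes>\<^sub>M \<nu>))"
    by (simp add: emeasure_distr emeasure_density)
  also have "\<dots> = (\<integral>\<^sup>+y. \<integral>\<^sup>+x. f (x, y) * indicator B y \<partial>\<mu> \<partial>\<nu>)"
    by (auto simp: nn_integral_snd[symmetric] intro!: nn_integral_cong split: split_indicator)
  also have "\<dots> = (\<integral>\<^sup>+y. (\<integral>\<^sup>+x. f (x, y) \<partial>\<mu>) * indicator B y \<partial>\<nu>)"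
    by (intro nn_integral_cong nn_integral_multc) measurable
  also have "\<dots> = (\<integral>\<^sup>+y. indicator B y \<partial>\<nu>)"
    using cols by (intro nn_integral_cong_AE) auto
  finally show "emeasure (distr (density (\<mu> \<Otimes>\<^sub>M \<nu>) f) \<nu> snd) B = emeasure \<nu> B"
    by simp
qed simp

lemma density_in_couplings:
  assumes "prob_space \<mu>" "prob_space \<nu>" and f: "f \<in> borel_measurable (\<mu> \<Otimes>\<^sub>M \<nu>)"
    and rows: "AE x in \<mu>. (\<integral>\<^sup>+y. f (x, y) \<partial>\<nu>) = 1"
    and cols: "AE y in \<nu>. (\<integral>\<^sup>+x. f (x, y) \<partial>\<mu>) = 1"
  shows "density (\<mu> \<Otimes>\<^sub>M \<nu>) f \<in> couplings \<mu> \<nu>"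
proof -
  interpret pair_prob_space \<mu> \<nu>
    using assms by (simp add: pair_prob_space_def pair_sigma_finite_def prob_space_imp_sigma_finite)
  let ?\<gamma> = "density (\<mu> \<Otimes>\<^sub>M \<nu>) f"
  have fst: "distr ?\<gamma> \<mu> fst = \<mu>"
    using distr_density_pair_fst[OF M2.sigma_finite_measure_axioms f rows] .
  have "emeasure ?\<gamma> (space ?\<gamma>) = emeasure (distr ?\<gamma> \<mu> fst) (space \<mu>)"
    by (simp add: emeasure_distr space_pair_measure vimage_fst Times_Int_Times)
  then have "prob_space ?\<gamma>"
    by (intro prob_spaceI) (simp add: fst M1.emeasure_space_1)
  with fst distr_density_pair_snd[OF pair_sigma_finite_axioms f cols] show ?thesis
    unfolding couplings_def by simp
qed

definition partition_of_unity_on :: "'a set \<Rightarrow> 'b set \<Rightarrow> ('b \<Rightarrow> 'a \<Rightarrow> real) \<Rightarrow> bool" where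
  "partition_of_unity_on S V g \<longleftrightarrow> (\<forall>v\<in>V. \<forall>x\<in>S. g v x \<ge> 0) \<and> (\<forall>x\<in>S. (\<Sum>v\<in>V. g v x) = 1)"

lemma partition_of_unity_on_subset:
  "partition_of_unity_on T V g \<Longrightarrow> S \<subseteq> T \<Longrightarrow> partition_of_unity_on S V g"
  unfolding partition_of_unity_on_def by blast

lemma AE_partition_kernel_row_sum:
  fixes g :: "'b \<Rightarrow> 'a \<Rightarrow> real"
  assumes V: "finite V"
    and int_\<mu>: "\<And>v. v \<in> V \<Longrightarrow> integrable \<mu> (g v)"
    and int_\<nu>: "\<And>v. v \<in> V \<Longrightarrow> integrable \<nu> (g v)"
    and same_mean: "\<And>v. v \<in> V \<Longrightarrow> (\<integral>x. g v x \<partial>\<mu>) = (\<integral>x. g v x \<partial>\<nu>)"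
    and pu_\<mu>: "partition_of_unity_on (space \<mu>) V g" and pu_\<nu>: "partition_of_unity_on (space \<nu>) V g"
  shows "AE x in \<mu>. (\<integral>\<^sup>+y. ennreal (\<Sum>v\<in>V. g v x * g v y / (\<integral>x. g v x \<partial>\<mu>)) \<partial>\<nu>) = 1"
proof -
  have nonneg_\<mu>: "\<And>v x. v \<in> V \<Longrightarrow> x \<in> space \<mu> \<Longrightarrow> g v x \<ge> 0"
    and sum_\<mu>: "\<And>x. x \<in> space \<mu> \<Longrightarrow> (\<Sum>v\<in>V. g v x) = 1"
    and nonneg_\<nu>: "\<And>v y. v \<in> V \<Longrightarrow> y \<in> space \<nu> \<Longrightarrow> g v y \<ge> 0"
    using pu_\<mu> pu_\<nu> unfolding partition_of_unity_on_def by auto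
  define m where "m v = (\<integral>x. g v x \<partial>\<mu>)" for v
  \<comment> \<open>Where \<open>m v = 0\<close>, \<open>g v\<close> vanishes almost everywhere, so the junk value \<open>_ / 0 = 0\<close> is harmless.\<close>
  have m_nonneg: "m v \<ge> 0" if "v \<in> V" for v
    unfolding m_def using nonneg_\<mu>[OF that] by (intro integral_nonneg_AE) auto
  have "AE x in \<mu>. \<forall>v\<in>V. m v = 0 \<longrightarrow> g v x = 0"
  proof (rule AE_finite_allI[OF V])
    fix v assume v: "v \<in> V"
    show "AE x in \<mu>. m v = 0 \<longrightarrow> g v x = 0"
    proof (cases "m v = 0")
      case True
      then have "AE x in \<mu>. g v x = 0"
        using integral_nonneg_eq_0_iff_AE[OF int_\<mu>[OF v]] nonneg_\<mu>[OF v] unfolding m_def by auto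
      then show ?thesis by auto
    qed simp
  qed
  then show ?thesis
  proof (rule AE_mp[OF _ AE_I2], intro impI)
    fix x assume x: "x \<in> space \<mu>" and vanish: "\<forall>v\<in>V. m v = 0 \<longrightarrow> g v x = 0"
    have "(\<integral>\<^sup>+y. ennreal (\<Sum>v\<in>V. g v x * g v y / m v) \<partial>\<nu>) = ennreal (\<integral>y. (\<Sum>v\<in>V. g v x * g v y / m v) \<partial>\<nu>)"
      using int_\<nu> nonneg_\<mu>[OF _ x] nonneg_\<nu> m_nonneg
      by (intro nn_integral_eq_integral AE_I2 sum_nonneg divide_nonneg_nonneg mult_nonneg_nonneg) auto
    also have "(\<integral>y. (\<Sum>v\<in>V. g v x * g v y / m v) \<partial>\<nu>) = (\<Sum>v\<in>V. g v x * (\<integral>y. g v y \<partial>\<nu>) / m v)"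
      using int_\<nu> by simp
    also have "\<dots> = (\<Sum>v\<in>V. g v x)"
      using vanish same_mean by (intro sum.cong) (auto simp: m_def)
    finally show "(\<integral>\<^sup>+y. ennreal (\<Sum>v\<in>V. g v x * g v y / (\<integral>x. g v x \<partial>\<mu>)) \<partial>\<nu>) = 1"
      using sum_\<mu>[OF x] by (simp add: m_def)
  qed
qed

lemma partition_of_unity_coupling:
  fixes g :: "'b \<Rightarrow> 'a \<Rightarrow> real"
  assumes "prob_space \<mu>" "prob_space \<nu>" and V: "finite V"
    and int_\<mu>: "\<And>v. v \<in> V \<Longrightarrow> integrable \<mu> (g v)"
    and int_\<nu>: "\<And>v. v \<in> V \<Longrightarrow> integrable \<nu> (g v)"
    and same_mean: "\<And>v. v \<in> V \<Longrightarrow> (\<integral>x. g v x \<partial>\<mu>) = (\<integral>x. g v x \<partial>\<nu>)"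
    and pu_\<mu>: "partition_of_unity_on (space \<mu>) V g" and pu_\<nu>: "partition_of_unity_on (space \<nu>) V g"
  obtains \<gamma> where "\<gamma> \<in> couplings \<mu> \<nu>" "AE z in \<gamma>. \<exists>v\<in>V. g v (fst z) \<noteq> 0 \<and> g v (snd z) \<noteq> 0"
proof -
  define f where "f z = ennreal (\<Sum>v\<in>V. g v (fst z) * g v (snd z) / (\<integral>x. g v x \<partial>\<mu>))" for z
  have f_meas: "f \<in> borel_measurable (\<mu> \<Otimes>\<^sub>M \<nu>)"
    unfolding f_def using int_\<mu> int_\<nu>
    by (intro measurable_compose[OF _ measurable_ennreal] borel_measurable_sum borel_measurable_times
        borel_measurable_divide borel_measurable_const measurable_compose[OF measurable_fst]
        measurable_compose[OF measurable_snd]) auto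
  have rows: "AE x in \<mu>. (\<integral>\<^sup>+y. f (x, y) \<partial>\<nu>) = 1"
    unfolding f_def fst_conv snd_conv
    using AE_partition_kernel_row_sum[OF V int_\<mu> int_\<nu> same_mean pu_\<mu> pu_\<nu>] .
  have "AE y in \<nu>. (\<integral>\<^sup>+x. ennreal (\<Sum>v\<in>V. g v y * g v x / (\<integral>x. g v x \<partial>\<nu>)) \<partial>\<mu>) = 1"
    using AE_partition_kernel_row_sum[OF V int_\<nu> int_\<mu> same_mean[symmetric] pu_\<nu> pu_\<mu>] .
  moreover have "(\<Sum>v\<in>V. g v y * g v x / (\<integral>x. g v x \<partial>\<nu>)) = (\<Sum>v\<in>V. g v x * g v y / (\<integral>x. g v x \<partial>\<mu>))"
    for x y using same_mean by (intro sum.cong) auto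
  ultimately have cols: "AE y in \<nu>. (\<integral>\<^sup>+x. f (x, y) \<partial>\<mu>) = 1"
    by (simp add: f_def)
  show ?thesis
  proof
    show "density (\<mu> \<Otimes>\<^sub>M \<nu>) f \<in> couplings \<mu> \<nu>"
      by (rule density_in_couplings[OF assms(1,2) f_meas rows cols])
    have "0 < f z \<Longrightarrow> \<exists>v\<in>V. g v (fst z) \<noteq> 0 \<and> g v (snd z) \<noteq> 0" for z
      unfolding f_def by (metis (no_types, lifting) div_0 ennreal_0 less_irrefl mult_eq_0_iff sum.neutral)
    then show "AE z in density (\<mu> \<Otimes>\<^sub>M \<nu>) f. \<exists>v\<in>V. g v (fst z) \<noteq> 0 \<and> g v (snd z) \<noteq> 0"
      by (simp add: AE_density[OF f_meas])
  qed
qed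

lemma space_coupling:
  assumes "\<gamma> \<in> couplings \<mu> \<nu>" shows "space \<gamma> = space \<mu> \<times> space \<nu>"
  using assms sets_eq_imp_space_eq[of \<gamma> "\<mu> \<Otimes>\<^sub>M \<nu>"] unfolding couplings_def
  by (simp add: space_pair_measure)

lemma coupling_fst_integral:
  fixes h :: "'a \<Rightarrow> real"
  assumes "\<gamma> \<in> couplings \<mu> \<nu>" and h: "integrable \<mu> h"
  shows "integrable \<gamma> (\<lambda>z. h (fst z))" and "(\<integral>z. h (fst z) \<partial>\<gamma>) = (\<integral>x. h x \<partial>\<mu>)"
proof -
  have sets: "sets \<gamma> = sets (\<mu> \<Otimes>\<^sub>M \<nu>)" and marginal: "distr \<gamma> \<mu> fst = \<mu>"
    using assms(1) unfolding couplings_def by auto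
  have fst: "fst \<in> measurable \<gamma> \<mu>"
    using measurable_cong_sets[OF sets refl] measurable_fst by blast
  show "integrable \<gamma> (\<lambda>z. h (fst z))"
    using integrable_distr_eq[OF fst borel_measurable_integrable[OF h]] h marginal by simp
  show "(\<integral>z. h (fst z) \<partial>\<gamma>) = (\<integral>x. h x \<partial>\<mu>)"
    using integral_distr[OF fst borel_measurable_integrable[OF h]] marginal by simp
qed

lemma coupling_snd_integral:
  fixes h :: "'a \<Rightarrow> real"
  assumes "\<gamma> \<in> couplings \<mu> \<nu>" and h: "integrable \<nu> h"
  shows "integrable \<gamma> (\<lambda>z. h (snd z))" and "(\<integral>z. h (snd z) \<partial>\<gamma>) = (\<integral>y. h y \<partial>\<nu>)"
proof -
  have sets: "sets \<gamma> = sets (\<mu> \<Otimes>\<^sub>M \<nu>)" and marginal: "distr \<gamma> \<nu> snd = \<nu>"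
    using assms(1) unfolding couplings_def by auto
  have snd: "snd \<in> measurable \<gamma> \<nu>"
    using measurable_cong_sets[OF sets refl] measurable_snd by blast
  show "integrable \<gamma> (\<lambda>z. h (snd z))"
    using integrable_distr_eq[OF snd borel_measurable_integrable[OF h]] h marginal by simp
  show "(\<integral>z. h (snd z) \<partial>\<gamma>) = (\<integral>y. h y \<partial>\<nu>)"
    using integral_distr[OF snd borel_measurable_integrable[OF h]] marginal by simp
qed

section \<open>Bounds on the Wasserstein distance\<close>

lemma Wasserstein_le_of_coupling:
  assumes "\<gamma> \<in> couplings \<mu> \<nu>" "p > 0" "B \<ge> 0"
    and cost: "(\<integral>\<^sup>+z. ennreal (N (fst z - snd z) powr p) \<partial>\<gamma>) \<le> ennreal (B powr p)"
  shows "Wasserstein p N \<mu> \<nu> \<le> B"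
proof -
  define I where "I = (INF \<gamma>\<in>couplings \<mu> \<nu>. \<integral>\<^sup>+z. ennreal (N (fst z - snd z) powr p) \<partial>\<gamma>)"
  have "I \<le> ennreal (B powr p)"
    unfolding I_def using assms(1) cost by (meson INF_lower2)
  then have "enn2real I \<le> B powr p"
    by (metis enn2real_ennreal enn2real_mono ennreal_less_top powr_ge_zero)
  then have "enn2real I powr (1 / p) \<le> (B powr p) powr (1 / p)"
    using assms by (intro powr_mono2) auto
  also have "\<dots> = B"
    using assms by (simp add: powr_powr)
  finally show ?thesis
    unfolding Wasserstein_def I_def .
qed

lemma nn_integral_coupling_cost_le:
  fixes R :: "'a::real_vector \<Rightarrow> real"
  assumes N: "is_norm N" and \<gamma>: "\<gamma> \<in> couplings \<mu> \<nu>" and p: "p \<ge> 1" and "c > 0" "s > 0"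
    and R_\<mu>: "integrable \<mu> R" and R_\<nu>: "integrable \<nu> R"
    and R_nonneg: "\<And>x. x \<in> space \<mu> \<union> space \<nu> \<Longrightarrow> R x \<ge> 0"
    and "(\<integral>x. R x \<partial>\<mu>) \<le> s powr p" "(\<integral>x. R x \<partial>\<nu>) \<le> s powr p"
    and bound: "AE z in \<gamma>. N (fst z - snd z) \<le> c + R (fst z) powr (1 / p) + R (snd z) powr (1 / p)"
  shows "(\<integral>\<^sup>+z. ennreal (N (fst z - snd z) powr p) \<partial>\<gamma>) \<le> ennreal ((c + 2 * s) powr p)"
proof -
  define K where "K = (c + 2 * s) powr (p - 1)"
  define h where "h z = K * (c + (R (fst z) + R (snd z)) / s powr (p - 1))" for z
  have R_root: "(R x powr (1 / p)) powr p = R x" if "x \<in> space \<mu> \<union> space \<nu>" for x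
    using R_nonneg[OF that] p by (simp add: powr_powr)
  have "AE z in \<gamma>. N (fst z - snd z) powr p \<le> h z"
    using bound
  proof (rule AE_mp[OF _ AE_I2], intro impI)
    fix z assume "z \<in> space \<gamma>"
      and near: "N (fst z - snd z) \<le> c + R (fst z) powr (1 / p) + R (snd z) powr (1 / p)"
    then have z: "fst z \<in> space \<mu> \<union> space \<nu>" "snd z \<in> space \<mu> \<union> space \<nu>"
      using space_coupling[OF \<gamma>] by (auto simp: mem_Times_iff)
    have "N (fst z - snd z) powr p \<le> (c + R (fst z) powr (1 / p) + R (snd z) powr (1 / p)) powr p"
      using near p is_norm_nonneg[OF N] by (intro powr_mono2) auto
    also have "\<dots> \<le> K * (c + ((R (fst z) powr (1 / p)) powr p + (R (snd z) powr (1 / p)) powr p)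
        / s powr (p - 1))"
      unfolding K_def using assms by (intro powr_add3_le) auto
    also have "\<dots> = h z"
      unfolding h_def R_root[OF z(1)] R_root[OF z(2)] ..
    finally show "N (fst z - snd z) powr p \<le> h z" .
  qed
  note cost_le = this
  interpret \<gamma>: prob_space \<gamma> using \<gamma> unfolding couplings_def by simp
  have h_int: "integrable \<gamma> h"
    unfolding h_def using coupling_fst_integral(1)[OF \<gamma> R_\<mu>] coupling_snd_integral(1)[OF \<gamma> R_\<nu>]
    by simp
  have h_nonneg: "0 \<le> h z" if "z \<in> space \<gamma>" for z
    using that space_coupling[OF \<gamma>] R_nonneg \<open>c > 0\<close> unfolding h_def K_def
    by (auto simp: mem_Times_iff)
  have "(\<integral>z. h z \<partial>\<gamma>) = K * (c + ((\<integral>x. R x \<partial>\<mu>) + (\<integral>x. R x \<partial>\<nu>)) / s powr (p - 1))"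
    unfolding h_def using coupling_fst_integral[OF \<gamma> R_\<mu>] coupling_snd_integral[OF \<gamma> R_\<nu>]
    by (simp add: \<gamma>.prob_space)
  also have "\<dots> \<le> K * (c + 2 * s powr p / s powr (p - 1))"
    using assms unfolding K_def by (intro mult_left_mono add_left_mono divide_right_mono) auto
  also have "\<dots> = (c + 2 * s) powr p"
    using assms unfolding K_def by (simp add: powr_diff)
  finally have h_le: "(\<integral>z. h z \<partial>\<gamma>) \<le> (c + 2 * s) powr p" .
  have "(\<integral>\<^sup>+z. ennreal (N (fst z - snd z) powr p) \<partial>\<gamma>) \<le> (\<integral>\<^sup>+z. ennreal (h z) \<partial>\<gamma>)"
    using cost_le by (intro nn_integral_mono_AE) (auto intro: ennreal_leI)
  also have "\<dots> = ennreal (\<integral>z. h z \<partial>\<gamma>)"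
    using h_int h_nonneg by (intro nn_integral_eq_integral AE_I2)
  also have "\<dots> \<le> ennreal ((c + 2 * s) powr p)"
    using h_le by (rule ennreal_leI)
  finally show ?thesis .
qed

lemma Wasserstein_le_coupling_bound:
  fixes R :: "'a::real_vector \<Rightarrow> real"
  assumes N: "is_norm N" and \<gamma>: "\<gamma> \<in> couplings \<mu> \<nu>" and p: "p \<ge> 1" and "c \<ge> 0"
    and R_\<mu>: "integrable \<mu> R" and R_\<nu>: "integrable \<nu> R"
    and R_nonneg: "\<And>x. x \<in> space \<mu> \<union> space \<nu> \<Longrightarrow> R x \<ge> 0"
    and T_\<mu>: "(\<integral>x. R x \<partial>\<mu>) \<le> T" and T_\<nu>: "(\<integral>x. R x \<partial>\<nu>) \<le> T"
    and bound: "AE z in \<gamma>. N (fst z - snd z) \<le> c + R (fst z) powr (1 / p) + R (snd z) powr (1 / p)"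
  shows "Wasserstein p N \<mu> \<nu> \<le> c + 2 * T powr (1 / p)"
proof (rule field_le_epsilon)
  \<comment> \<open>\<open>powr_add3_le\<close> needs strictly positive weights, hence the slack \<open>\<epsilon>\<close>.\<close>
  fix \<epsilon> :: real assume "\<epsilon> > 0"
  define s where "s = T powr (1 / p) + \<epsilon> / 3"
  have "0 \<le> (\<integral>x. R x \<partial>\<mu>)"
    using R_nonneg by (intro integral_nonneg_AE AE_I2) auto
  then have "T = (T powr (1 / p)) powr p"
    using T_\<mu> p by (simp add: powr_powr)
  also have "\<dots> \<le> s powr p"
    unfolding s_def using \<open>\<epsilon> > 0\<close> p by (intro powr_mono2) auto
  finally have "T \<le> s powr p" .
  moreover have "s > 0"
    unfolding s_def using \<open>\<epsilon> > 0\<close> by (simp add: add_nonneg_pos)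
  moreover have
    "AE z in \<gamma>. N (fst z - snd z) \<le> (c + \<epsilon> / 3) + R (fst z) powr (1 / p) + R (snd z) powr (1 / p)"
    using bound by eventually_elim (use \<open>\<epsilon> > 0\<close> in simp)
  ultimately have
    "(\<integral>\<^sup>+z. ennreal (N (fst z - snd z) powr p) \<partial>\<gamma>) \<le> ennreal ((c + \<epsilon> / 3 + 2 * s) powr p)"
    using \<open>c \<ge> 0\<close> \<open>\<epsilon> > 0\<close> T_\<mu> T_\<nu>
    by (intro nn_integral_coupling_cost_le[OF N \<gamma> p _ _ R_\<mu> R_\<nu> R_nonneg]) auto
  then have "Wasserstein p N \<mu> \<nu> \<le> c + \<epsilon> / 3 + 2 * s"
    using \<gamma> p \<open>c \<ge> 0\<close> \<open>s > 0\<close> \<open>\<epsilon> > 0\<close> by (intro Wasserstein_le_of_coupling) auto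
  then show "Wasserstein p N \<mu> \<nu> \<le> c + 2 * T powr (1 / p) + \<epsilon>"
    unfolding s_def by simp
qed

lemma Wasserstein_le_partition_of_unity:
  fixes N :: "'a::real_vector \<Rightarrow> real" and g :: "'a \<Rightarrow> 'a \<Rightarrow> real"
  assumes N: "is_norm N" and p: "p \<ge> 1" and "prob_space \<mu>" "prob_space \<nu>" and V: "finite V"
    and int_\<mu>: "\<And>v. v \<in> V \<Longrightarrow> integrable \<mu> (g v)"
    and int_\<nu>: "\<And>v. v \<in> V \<Longrightarrow> integrable \<nu> (g v)"
    and same_mean: "\<And>v. v \<in> V \<Longrightarrow> (\<integral>x. g v x \<partial>\<mu>) = (\<integral>x. g v x \<partial>\<nu>)"
    and pu_\<mu>: "partition_of_unity_on (space \<mu>) V g" and pu_\<nu>: "partition_of_unity_on (space \<nu>) V g"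
    and R_\<mu>: "integrable \<mu> R" and R_\<nu>: "integrable \<nu> R"
    and R_nonneg: "\<And>x. x \<in> space \<mu> \<union> space \<nu> \<Longrightarrow> R x \<ge> 0"
    and T_\<mu>: "(\<integral>x. R x \<partial>\<mu>) \<le> T" and T_\<nu>: "(\<integral>x. R x \<partial>\<nu>) \<le> T"
    and "\<eta> \<ge> 0"
    and near: "\<And>x v. x \<in> space \<mu> \<union> space \<nu> \<Longrightarrow> v \<in> V \<Longrightarrow> g v x \<noteq> 0 \<Longrightarrow> N (x - v) \<le> \<eta> + R x powr (1 / p)"
  shows "Wasserstein p N \<mu> \<nu> \<le> 2 * \<eta> + 2 * T powr (1 / p)"
proof -
  obtain \<gamma> where \<gamma>: "\<gamma> \<in> couplings \<mu> \<nu>"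
    and supp: "AE z in \<gamma>. \<exists>v\<in>V. g v (fst z) \<noteq> 0 \<and> g v (snd z) \<noteq> 0"
    using partition_of_unity_coupling[OF assms(3,4) V int_\<mu> int_\<nu> same_mean pu_\<mu> pu_\<nu>] by blast
  have "AE z in \<gamma>. N (fst z - snd z) \<le> 2 * \<eta> + R (fst z) powr (1 / p) + R (snd z) powr (1 / p)"
    using supp
  proof (rule AE_mp[OF _ AE_I2], intro impI)
    fix z assume "z \<in> space \<gamma>" and "\<exists>v\<in>V. g v (fst z) \<noteq> 0 \<and> g v (snd z) \<noteq> 0"
    then obtain v where v: "v \<in> V" "g v (fst z) \<noteq> 0" "g v (snd z) \<noteq> 0"
      and z: "fst z \<in> space \<mu> \<union> space \<nu>" "snd z \<in> space \<mu> \<union> space \<nu>"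
      using space_coupling[OF \<gamma>] by (auto simp: mem_Times_iff)
    have "N (fst z - snd z) \<le> N (fst z - v) + N (snd z - v)"
      using is_norm_triangle_diff[OF N] is_norm_minus_commute[OF N] by metis
    then show "N (fst z - snd z) \<le> 2 * \<eta> + R (fst z) powr (1 / p) + R (snd z) powr (1 / p)"
      using near[OF z(1) v(1,2)] near[OF z(2) v(1,3)] by simp
  qed
  then show ?thesis
    using Wasserstein_le_coupling_bound[OF N \<gamma> p _ R_\<mu> R_\<nu> R_nonneg T_\<mu> T_\<nu>] \<open>\<eta> \<ge> 0\<close> by simp
qed

section \<open>Measures with finite moments of the test functions\<close>

lemma space_borel_prob_on:
  assumes "borel_prob_on Y \<mu>" shows "space \<mu> = Y"
proof -
  have "space \<mu> = space (restrict_space borel Y)"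
    using assms unfolding borel_prob_on_def by (intro sets_eq_imp_space_eq) simp
  then show ?thesis
    by (simp add: space_restrict_space)
qed

lemma in_Lp_integrable:
  assumes "finite_measure \<mu>" "p \<ge> 1" and h: "in_Lp p \<mu> h"
  shows "integrable \<mu> h"
proof -
  interpret finite_measure \<mu> by fact
  have "integrable \<mu> (\<lambda>x. 1 + \<bar>h x\<bar> powr p)"
    using h unfolding in_Lp_def by simp
  then show ?thesis
  proof (rule Bochner_Integration.integrable_bound)
    show "h \<in> borel_measurable \<mu>"
      using h unfolding in_Lp_def by simp
    have "\<bar>h x\<bar> \<le> 1 + \<bar>h x\<bar> powr p" for x
    proof (cases "\<bar>h x\<bar> \<le> 1")
      case False
      then have "\<bar>h x\<bar> powr 1 \<le> \<bar>h x\<bar> powr p"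
        using \<open>p \<ge> 1\<close> by (intro powr_mono) auto
      then show ?thesis by simp
    qed (simp add: add_increasing2)
    then show "AE x in \<mu>. norm (h x) \<le> norm (1 + \<bar>h x\<bar> powr p)"
      by (intro AE_I2) simp
  qed
qed

lemma PpG_integrable_span1:
  assumes "p \<ge> 1" "\<mu> \<in> PpG p N Y G" "f \<in> span1 G"
  shows "integrable \<mu> f"
proof -
  interpret prob_space \<mu>
    using assms(2) unfolding PpG_def Pp_def borel_prob_on_def by auto
  obtain c0 S c where S: "finite S" "S \<subseteq> G" and f: "f = (\<lambda>x. c0 + (\<Sum>h\<in>S. c h * h x))"
    using assms(3) unfolding span1_def by auto
  have "integrable \<mu> h" if "h \<in> S" for h
    using in_Lp_integrable[OF finite_measure_axioms assms(1)] assms(2) S that unfolding PpG_def by auto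
  then show ?thesis
    unfolding f by simp
qed

lemma G_equiv_span1:
  assumes "p \<ge> 1" "\<mu> \<in> PpG p N Y G" "\<nu> \<in> PpG p N Y G" "G_equiv G \<mu> \<nu>"
  shows "G_equiv (span1 G) \<mu> \<nu>"
  unfolding G_equiv_def
proof
  fix f assume "f \<in> span1 G"
  then obtain c0 S c where S: "finite S" "S \<subseteq> G" and f: "f = (\<lambda>x. c0 + (\<Sum>h\<in>S. c h * h x))"
    unfolding span1_def by auto
  have integral_f: "(\<integral>x. f x \<partial>M) = c0 + (\<Sum>h\<in>S. c h * (\<integral>x. h x \<partial>M))" if M: "M \<in> PpG p N Y G" for M
  proof -
    interpret prob_space M
      using M unfolding PpG_def Pp_def borel_prob_on_def by auto
    have "integrable M h" if "h \<in> S" for h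
      using in_Lp_integrable[OF finite_measure_axioms assms(1)] M S that unfolding PpG_def by auto
    then show ?thesis
      unfolding f by (simp add: prob_space)
  qed
  show "(\<integral>x. f x \<partial>\<mu>) = (\<integral>x. f x \<partial>\<nu>)"
    using assms(4) S unfolding integral_f[OF assms(2)] integral_f[OF assms(3)] G_equiv_def
    by (auto intro!: sum.cong)
qed

section \<open>Polyhedral covers\<close>

lemma finite_ext_dirs:
  fixes C :: "'a::euclidean_space set"
  assumes "polyhedron C" shows "finite (ext_dirs C)"
proof -
  define dirs where "dirs F = {z. norm z = 1 \<and> (\<exists>x. F = {x + l *\<^sub>R z | l. l \<ge> 0})}" for F :: "'a set"
  have "ext_dirs C \<subseteq> \<Union> (dirs ` {F. F face_of C})"
    unfolding ext_dirs_def dirs_def by blast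
  moreover have "u = u'" if "u \<in> dirs F" "u' \<in> dirs F" for F u u'
  proof -
    obtain x where x: "F = {x + l *\<^sub>R u | l. l \<ge> 0}" and "norm u = 1"
      using \<open>u \<in> dirs F\<close> unfolding dirs_def by auto
    obtain x' where x': "F = {x' + l *\<^sub>R u' | l. l \<ge> 0}" and "norm u' = 1"
      using \<open>u' \<in> dirs F\<close> unfolding dirs_def by auto
    have "x + 0 *\<^sub>R u \<in> F"
      unfolding x by blast
    then obtain l0 where "l0 \<ge> 0" "x = x' + l0 *\<^sub>R u'"
      unfolding x' by auto
    moreover have "x' + (l0 + 1) *\<^sub>R u' \<in> F"
      unfolding x' using \<open>l0 \<ge> 0\<close> by (intro CollectI exI[of _ "l0 + 1"]) auto
    then obtain l where "l \<ge> 0" "x' + (l0 + 1) *\<^sub>R u' = x + l *\<^sub>R u"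
      unfolding x by blast
    ultimately have "u' = l *\<^sub>R u"
      by (simp add: algebra_simps)
    with \<open>l \<ge> 0\<close> \<open>norm u = 1\<close> \<open>norm u' = 1\<close> show "u = u'"
      by simp
  qed
  then have "dirs F = {} \<or> (\<exists>u. dirs F = {u})" for F
    by blast
  then have "finite (dirs F)" for F
    by (metis finite.emptyI finite.insertI)
  ultimately show ?thesis
    using finite_polyhedron_faces[OF assms] by (auto intro: finite_subset)
qed

lemma polyhedral_cover_finite_vertices:
  assumes "polyhedral_cover CC Y" "C \<in> CC" shows "finite (vertices C)"
proof -
  have "polyhedron C"
    using assms unfolding polyhedral_cover_def by blast
  then show ?thesis
    unfolding vertices_def by (rule finite_polyhedron_extreme_points)
qed

lemma polyhedral_cover_finite_cover_vertices:
  assumes "polyhedral_cover CC Y" shows "finite (cover_vertices CC)"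
  unfolding cover_vertices_def using assms polyhedral_cover_finite_vertices[OF assms]
  by (intro finite_UN_I) (auto simp: polyhedral_cover_def)

lemma polyhedral_cover_finite_cover_dirs:
  assumes "polyhedral_cover CC Y" shows "finite (cover_dirs CC)"
  unfolding cover_dirs_def using assms
  by (intro finite_UN_I finite_ext_dirs) (auto simp: polyhedral_cover_def)

lemma polyhedral_cover_in_cover_faces:
  assumes "polyhedral_cover CC Y" "C \<in> CC" shows "C \<in> cover_faces CC"
proof -
  have "polyhedron C" "vertices C \<noteq> {}"
    using assms unfolding polyhedral_cover_def by auto
  moreover from \<open>vertices C \<noteq> {}\<close> have "C \<noteq> {}"
    unfolding vertices_def extreme_point_of_def by auto
  ultimately show ?thesis
    using assms(2) face_of_refl[OF polyhedron_imp_convex] unfolding cover_faces_def by auto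
qed

lemma norm_diff_vertices_le_mesh:
  assumes "polyhedral_cover CC Y" "C \<in> CC" "v \<in> vertices C" "v' \<in> vertices C"
  shows "N (v - v') \<le> mesh N CC"
proof -
  have "N (v - v') \<le> Max {N (v - v') | v v'. v \<in> vertices C \<and> v' \<in> vertices C}"
    using assms polyhedral_cover_finite_vertices[OF assms(1,2)] by (intro Max_ge finite_image_set2) auto
  also have "\<dots> \<le> mesh N CC"
    using assms unfolding mesh_def polyhedral_cover_def by (intro Max_ge) auto
  finally show ?thesis .
qed

lemma mesh_nonneg:
  assumes "is_norm N" "polyhedral_cover CC Y" "CC \<noteq> {}" shows "mesh N CC \<ge> 0"
proof -
  obtain C v where "C \<in> CC" "v \<in> vertices C"
    using assms unfolding polyhedral_cover_def by blast
  then show ?thesis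
    using norm_diff_vertices_le_mesh[OF assms(2), of C v v N] is_norm_zero[OF assms(1)] by simp
qed

lemma norm_diff_hull_vertices_le_mesh:
  assumes "is_norm N" "polyhedral_cover CC Y" "C \<in> CC"
    and "y \<in> convex hull (vertices C)" "v \<in> vertices C"
  shows "N (y - v) \<le> mesh N CC"
proof -
  have "\<forall>y\<in>convex hull (vertices C). N (y - v) \<le> mesh N CC"
    using norm_diff_vertices_le_mesh[OF assms(2,3) _ assms(5)]
    by (intro convex_on_convex_hull_bound convex_on_is_norm_diff[OF assms(1) convex_convex_hull]) auto
  then show ?thesis
    using assms(4) by blast
qed

lemma norm_diff_vertex_le_mesh_plus_dist:
  assumes "is_norm N" "polyhedral_cover CC Y" "C \<in> CC" "v \<in> vertices C"
  shows "N (x - v) \<le> mesh N CC + (INF y\<in>convex hull (vertices C). N (x - y))"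
proof -
  have "N (x - v) - mesh N CC \<le> (INF y\<in>convex hull (vertices C). N (x - y))"
  proof (rule cINF_greatest)
    show "convex hull (vertices C) \<noteq> {}"
      using assms(4) by auto
    fix y assume "y \<in> convex hull (vertices C)"
    then have "N (y - v) \<le> mesh N CC"
      by (rule norm_diff_hull_vertices_le_mesh[OF assms(1-3) _ assms(4)])
    then show "N (x - v) - mesh N CC \<le> N (x - y)"
      using is_norm_triangle_diff[OF assms(1), of x v y] by linarith
  qed
  then show ?thesis by simp
qed

lemma bounded_polyhedron_eq_hull_vertices:
  fixes C :: "'a::euclidean_space set"
  assumes "polyhedron C" "bounded C" shows "C = convex hull (vertices C)"
  using assms Krein_Milman_Minkowski[of C]
  by (simp add: compact_eq_bounded_closed polyhedron_imp_closed polyhedron_imp_convex vertices_def)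

lemma vertex_interpD:
  assumes "vertex_interp CC g"
  shows "\<And>v x. v \<in> cover_vertices CC \<Longrightarrow> x \<in> \<Union>CC \<Longrightarrow> g v x \<ge> 0"
    and "\<And>F x. F \<in> cover_faces CC \<Longrightarrow> x \<in> F \<Longrightarrow> (\<Sum>v\<in>vertices F. g v x) = 1"
    and "\<And>F x v. F \<in> cover_faces CC \<Longrightarrow> x \<in> F \<Longrightarrow> v \<in> cover_vertices CC \<Longrightarrow> v \<notin> vertices F \<Longrightarrow>
      g v x = 0"
  using assms unfolding vertex_interp_def by (simp_all only: Ball_def Diff_iff) blast+

lemma radial_fun_setD:
  assumes "radial_fun_set p N CC gb"
  shows "\<And>u x. u \<in> cover_dirs CC \<Longrightarrow> x \<in> \<Union>CC \<Longrightarrow> gb u x \<ge> 0"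
    and "\<And>F x. F \<in> cover_faces CC \<Longrightarrow> \<not> bounded F \<Longrightarrow> x \<in> F \<Longrightarrow>
      (INF y\<in>convex hull (vertices F). N (x - y)) powr p \<le> (\<Sum>u\<in>ext_dirs F. gb u x)"
  using assms unfolding radial_fun_set_def by (simp_all only: Ball_def) blast+

lemma vertex_interp_partition_of_unity:
  assumes cover: "polyhedral_cover CC Y" and g: "vertex_interp CC g"
  shows "partition_of_unity_on (\<Union>CC) (cover_vertices CC) g"
proof -
  have "(\<Sum>v\<in>cover_vertices CC. g v x) = 1" if "C \<in> CC" "x \<in> C" for C x
  proof -
    have face: "C \<in> cover_faces CC"
      by (rule polyhedral_cover_in_cover_faces[OF cover that(1)])
    have "(\<Sum>v\<in>cover_vertices CC. g v x) = (\<Sum>v\<in>vertices C. g v x)"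
    proof (rule sum.mono_neutral_right[OF polyhedral_cover_finite_cover_vertices[OF cover]])
      show "vertices C \<subseteq> cover_vertices CC"
        unfolding cover_vertices_def using that(1) by blast
      show "\<forall>v\<in>cover_vertices CC - vertices C. g v x = 0"
        using vertex_interpD(3)[OF g face that(2)] by blast
    qed
    also have "\<dots> = 1"
      by (rule vertex_interpD(2)[OF g face that(2)])
    finally show ?thesis .
  qed
  then show ?thesis
    using vertex_interpD(1)[OF g] unfolding partition_of_unity_on_def by blast
qed

lemma vertex_interp_support:
  assumes "polyhedral_cover CC Y" "vertex_interp CC g" "C \<in> CC" "x \<in> C"
    and "v \<in> cover_vertices CC" "g v x \<noteq> 0"
  shows "v \<in> vertices C"
  using vertex_interpD(3)[OF assms(2) polyhedral_cover_in_cover_faces[OF assms(1,3)] assms(4,5)] assms(6)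
  by blast

lemma radial_fun_set_dist_hull_le:
  assumes cover: "polyhedral_cover CC Y" and gb: "radial_fun_set p N CC gb"
    and "C \<in> CC" "\<not> bounded C" "x \<in> C"
  shows "(INF y\<in>convex hull (vertices C). N (x - y)) powr p \<le> (\<Sum>u\<in>cover_dirs CC. gb u x)"
proof -
  have "(INF y\<in>convex hull (vertices C). N (x - y)) powr p \<le> (\<Sum>u\<in>ext_dirs C. gb u x)"
    by (rule radial_fun_setD(2)[OF gb polyhedral_cover_in_cover_faces[OF cover \<open>C \<in> CC\<close>] assms(4,5)])
  also have "\<dots> \<le> (\<Sum>u\<in>cover_dirs CC. gb u x)"
  proof (rule sum_mono2[OF polyhedral_cover_finite_cover_dirs[OF cover]])
    show "ext_dirs C \<subseteq> cover_dirs CC"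
      unfolding cover_dirs_def using \<open>C \<in> CC\<close> by blast
    show "0 \<le> gb u x" if "u \<in> cover_dirs CC - ext_dirs C" for u
      using radial_fun_setD(1)[OF gb] that \<open>C \<in> CC\<close> \<open>x \<in> C\<close> by blast
  qed
  finally show ?thesis .
qed

lemma norm_diff_vertex_le_mesh_plus_radial:
  assumes N: "is_norm N" and p: "p \<ge> 1" and cover: "polyhedral_cover CC Y"
    and C: "C \<in> CC" "x \<in> C" and v: "v \<in> vertices C" and "r \<ge> 0"
    and radial: "\<not> bounded C \<Longrightarrow> (INF y\<in>convex hull (vertices C). N (x - y)) powr p \<le> r"
  shows "N (x - v) \<le> mesh N CC + r powr (1 / p)"
proof (cases "bounded C")
  case True
  then have "x \<in> convex hull (vertices C)"
    using bounded_polyhedron_eq_hull_vertices C cover unfolding polyhedral_cover_def by blast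
  then show ?thesis
    using norm_diff_hull_vertices_le_mesh[OF N cover C(1) _ v] by (smt (verit) powr_ge_zero)
next
  case False
  define d where "d = (INF y\<in>convex hull (vertices C). N (x - y))"
  have "d \<ge> 0"
    unfolding d_def using v is_norm_nonneg[OF N] by (intro cINF_greatest) auto
  then have "d = (d powr p) powr (1 / p)"
    using p by (simp add: powr_powr)
  also have "\<dots> \<le> r powr (1 / p)"
    unfolding d_def using radial[OF False] p by (intro powr_mono2) auto
  finally show ?thesis
    using norm_diff_vertex_le_mesh_plus_dist[OF N cover C(1) v, of x] unfolding d_def by linarith
qed

lemma Wasserstein_le_cover:
  fixes N :: "'a::euclidean_space \<Rightarrow> real"
  assumes N: "is_norm N" and p: "p \<ge> 1" and cover: "polyhedral_cover CC Y"
    and g: "vertex_interp CC g" and g_span: "\<forall>v\<in>cover_vertices CC. g v \<in> span1 G"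
    and \<mu>: "\<mu> \<in> PpG p N Y G" and \<nu>: "\<nu> \<in> PpG p N Y G" and equiv: "G_equiv G \<mu> \<nu>"
    and R_\<mu>: "integrable \<mu> R" and R_\<nu>: "integrable \<nu> R" and R_eq: "(\<integral>x. R x \<partial>\<nu>) = (\<integral>x. R x \<partial>\<mu>)"
    and R_nonneg: "\<And>x. x \<in> Y \<Longrightarrow> R x \<ge> 0"
    and radial: "\<And>C x. C \<in> CC \<Longrightarrow> \<not> bounded C \<Longrightarrow> x \<in> C \<Longrightarrow>
      (INF y\<in>convex hull (vertices C). N (x - y)) powr p \<le> R x"
  shows "Wasserstein p N \<mu> \<nu> \<le> 2 * mesh N CC + 2 * (\<integral>x. R x \<partial>\<mu>) powr (1 / p)"
proof -
  have "prob_space \<mu>" "prob_space \<nu>" and space: "space \<mu> = Y" "space \<nu> = Y"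
    using \<mu> \<nu> space_borel_prob_on unfolding PpG_def Pp_def borel_prob_on_def by auto
  have Y_cover: "Y \<subseteq> \<Union>CC"
    using cover unfolding polyhedral_cover_def by blast
  have "Y \<noteq> {}"
    using prob_space.not_empty[OF \<open>prob_space \<mu>\<close>] space by simp
  then have "mesh N CC \<ge> 0"
    using Y_cover by (intro mesh_nonneg[OF N cover]) auto
  have pu: "partition_of_unity_on Y (cover_vertices CC) g"
    using partition_of_unity_on_subset[OF vertex_interp_partition_of_unity[OF cover g] Y_cover] .
  have near: "N (x - v) \<le> mesh N CC + R x powr (1 / p)"
    if "x \<in> Y" "v \<in> cover_vertices CC" "g v x \<noteq> 0" for x v
  proof -
    obtain C where C: "C \<in> CC" "x \<in> C"
      using Y_cover \<open>x \<in> Y\<close> by blast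
    then show ?thesis
      using vertex_interp_support[OF cover g C that(2,3)] R_nonneg[OF \<open>x \<in> Y\<close>] radial[OF C(1) _ C(2)]
      by (intro norm_diff_vertex_le_mesh_plus_radial[OF N p cover C]) auto
  qed
  show ?thesis
  proof (rule Wasserstein_le_partition_of_unity[OF N p \<open>prob_space \<mu>\<close> \<open>prob_space \<nu>\<close>
        polyhedral_cover_finite_cover_vertices[OF cover], where R = R and \<eta> = "mesh N CC"])
    show "integrable \<mu> (g v)" "integrable \<nu> (g v)" if "v \<in> cover_vertices CC" for v
      using PpG_integrable_span1[OF p \<mu>] PpG_integrable_span1[OF p \<nu>] g_span that by auto
    show "(\<integral>x. g v x \<partial>\<mu>) = (\<integral>x. g v x \<partial>\<nu>)" if "v \<in> cover_vertices CC" for v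
      using G_equiv_span1[OF p \<mu> \<nu> equiv] g_span that unfolding G_equiv_def by auto
  qed (use space pu R_\<mu> R_\<nu> R_eq R_nonneg \<open>mesh N CC \<ge> 0\<close> near in auto)
qed

lemma Wasserstein_le_cover_radial:
  fixes N :: "'a::euclidean_space \<Rightarrow> real"
  assumes N: "is_norm N" and p: "p \<ge> 1" and cover: "polyhedral_cover CC Y"
    and g: "vertex_interp CC g" and g_span: "\<forall>v\<in>cover_vertices CC. g v \<in> span1 G"
    and gb: "radial_fun_set p N CC gb" and gb_span: "\<forall>u\<in>cover_dirs CC. gb u \<in> span1 G"
    and \<mu>: "\<mu> \<in> PpG p N Y G" and \<nu>: "\<nu> \<in> PpG p N Y G" and equiv: "G_equiv G \<mu> \<nu>"
  shows "Wasserstein p N \<mu> \<nu> \<le> 2 * mesh N CC + 2 * (\<Sum>u\<in>cover_dirs CC. \<integral>x. gb u x \<partial>\<mu>) powr (1 / p)"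
proof -
  have gb_int: "integrable \<mu> (gb u)" "integrable \<nu> (gb u)" if "u \<in> cover_dirs CC" for u
    using PpG_integrable_span1[OF p \<mu>] PpG_integrable_span1[OF p \<nu>] gb_span that by auto
  have gb_eq: "(\<integral>x. gb u x \<partial>\<nu>) = (\<integral>x. gb u x \<partial>\<mu>)" if "u \<in> cover_dirs CC" for u
    using G_equiv_span1[OF p \<mu> \<nu> equiv] gb_span that unfolding G_equiv_def by auto
  have Y_cover: "Y \<subseteq> \<Union>CC"
    using cover unfolding polyhedral_cover_def by blast
  have "Wasserstein p N \<mu> \<nu> \<le> 2 * mesh N CC + 2 * (\<integral>x. (\<Sum>u\<in>cover_dirs CC. gb u x) \<partial>\<mu>) powr (1 / p)"
  proof (rule Wasserstein_le_cover[OF N p cover g g_span \<mu> \<nu> equiv])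
    show "(\<integral>x. (\<Sum>u\<in>cover_dirs CC. gb u x) \<partial>\<nu>) = (\<integral>x. (\<Sum>u\<in>cover_dirs CC. gb u x) \<partial>\<mu>)"
      using gb_int gb_eq by (simp add: integral_sum)
    show "0 \<le> (\<Sum>u\<in>cover_dirs CC. gb u x)" if "x \<in> Y" for x
      using radial_fun_setD(1)[OF gb] Y_cover that by (intro sum_nonneg) blast
  qed (use gb_int radial_fun_set_dist_hull_le[OF cover gb] in auto)
  then show ?thesis
    using gb_int by (simp add: integral_sum)
qed

theorem theorem3p14:
  fixes N :: "real ^ 'm \<Rightarrow> real" and p :: real
    and Y :: "(real ^ 'm) set" and CC :: "(real ^ 'm) set set"
  assumes "is_norm N" and "p \<ge> 1" and "closed Y" and "polyhedral_cover CC Y"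
  shows "((\<forall>C\<in>CC. bounded C) \<longrightarrow>
           (\<forall>G. interp_fun_set CC G \<longrightarrow>
              (\<forall>\<mu>\<in>PpG p N Y G. \<forall>\<nu>\<in>PpG p N Y G. G_equiv G \<mu> \<nu> \<longrightarrow>
                 Wasserstein p N \<mu> \<nu> \<le> 2 * mesh N CC))) \<and>
         (\<not> (\<forall>C\<in>CC. bounded C) \<longrightarrow>
           (\<forall>G gb. p_interp_fun_set p N CC G \<and> radial_fun_set p N CC gb \<and>
                   (\<forall>u\<in>cover_dirs CC. gb u \<in> span1 G) \<longrightarrow>
              (\<forall>\<mu>\<in>PpG p N Y G. \<forall>\<nu>\<in>PpG p N Y G. G_equiv G \<mu> \<nu> \<longrightarrow>
                 Wasserstein p N \<mu> \<nu> \<le> 2 * mesh N CC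
                   + 2 * (\<Sum>u\<in>cover_dirs CC. \<integral>x. gb u x \<partial>\<mu>) powr (1 / p))))"
proof (intro conjI impI allI ballI)
  fix G \<mu> \<nu> assume bounded: "\<forall>C\<in>CC. bounded C" and "interp_fun_set CC G"
    and \<mu>: "\<mu> \<in> PpG p N Y G" and \<nu>: "\<nu> \<in> PpG p N Y G" and equiv: "G_equiv G \<mu> \<nu>"
  then obtain g where g: "vertex_interp CC g" "\<forall>v\<in>cover_vertices CC. g v \<in> span1 G"
    unfolding interp_fun_set_def by blast
  have "Wasserstein p N \<mu> \<nu> \<le> 2 * mesh N CC + 2 * (\<integral>x. 0 \<partial>\<mu>) powr (1 / p)"
    by (rule Wasserstein_le_cover[OF assms(1,2,4) g \<mu> \<nu> equiv]) (use bounded in auto)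
  then show "Wasserstein p N \<mu> \<nu> \<le> 2 * mesh N CC"
    by simp
next
  fix G gb \<mu> \<nu>
  assume "p_interp_fun_set p N CC G \<and> radial_fun_set p N CC gb \<and> (\<forall>u\<in>cover_dirs CC. gb u \<in> span1 G)"
    and "\<mu> \<in> PpG p N Y G" "\<nu> \<in> PpG p N Y G" "G_equiv G \<mu> \<nu>"
  then show "Wasserstein p N \<mu> \<nu> \<le> 2 * mesh N CC + 2 * (\<Sum>u\<in>cover_dirs CC. \<integral>x. gb u x \<partial>\<mu>) powr (1 / p)"
    using Wasserstein_le_cover_radial[OF assms(1,2,4)] unfolding p_interp_fun_set_def interp_fun_set_def
    by blast
qed
end
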